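(* Let $D_{d,k}$ be a partial DCell, and let $\alpha'=\alpha_k\cdots\alpha_{l+2}$ with $3\le l+2\le k$. If $m$ is the largest integer such that $D_{d,l}^{\alpha'm}$ is non-empty, then $D_{d,l}^{\alpha'i}$ and $D_{d,l}^{\alpha'j}$ are linked for all $i,j$ with $0\le i<j<m$, and $D_{d,l}^{\alpha'm}$ is linked to at least $\min\{m,t_1\}$ of the sub-partial $DCell_l$s $D_{d,l}^{\alpha'i}$.
   Context: DCell with parameter $n\ge2$: $DCell_0=D_0=K_n$, $t_0=n$; for $j\ge1$, $D_j$ consists of $t_{j-1}+1$ vertex-disjoint copies $D_{j-1}^0,\dots,D_{j-1}^{t_{j-1}}$ of $D_{j-1}$ plus level $j$ edges, and $t_j=t_{j-1}(t_{j-1}+1)$ (so $t_1=n(n+1)$). A vertex of $D_k$ has label $(\alpha_k,\dots,\alpha_1,\alpha_0)$, where $\alpha_j\in\{0,\dots,t_{j-1}\}$ is the index of the copy of $D_{j-1}$ inside the containing $D_j$ and $\alpha_0\in\{0,\dots,n-1\}$; $uid_{j}=\alpha_0+\sum_{l=1}^{j}\alpha_l t_{l-1}$. For $a<b$, the vertex with $uid_{j-1}=b-1$ in $D_{j-1}^a$ is joined to the vertex with $uid_{j-1}=a$ in $D_{j-1}^b$. Enumeration: for $k\ge2$ put $a_i=t_{i-1}+1$ ($2\le i\le k$), $A=[a_k]\times\cdots\times[a_2]$ with $[a]=\{0,\dots,a-1\}$; $\alpha=\alpha_k\cdots\alpha_2\in A$ identifies the copy of $DCell_1$ consisting of the vertices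 with labels $(\alpha_k,\dots,\alpha_2,\cdot,\cdot)$. Prefixes of $\alpha$ are $\alpha_k\cdots\alpha_{l+1}$ ($2\le l+1\le k$), $\varnothing$ is the empty prefix, and $\beta i$ denotes appending $i$. An array $\phi:A\to\{0,1\}$ starts at $0$; a tuple $\beta$ is non-empty if some $\alpha$ with prefix (or equal to) $\beta$ has $\phi(\alpha)=1$, empty otherwise, full if all such $\alpha$ have $\phi(\alpha)=1$. Next$(\beta)$, $\beta=\alpha_k\cdots\alpha_{l+1}$ ($l=k$ if $\beta=\varnothing$): let $m$ be the least $i$ with $\beta i$ empty; if $l=2$ set $\phi(\beta m):=1$ and stop; otherwise if $m\ge a_2$ replace $m$ by the least $i$ with $\beta i$ not full; then call Next$(\beta m)$. The partial DCell $D_{d,k}$ is the subgraph of $DCell_k$ induced by the vertices of the $DCell_1$s $\alpha$ with $\phi(\alpha)=1$ after $d$ calls of Next$(\varnothing)$. For a tuple $\beta=\alpha_k\cdots\alpha_{l+1}$, the sub-partial $DCell_l$ $D_{d,l}^{\beta}$ is the subgraph of $D_{d,k}$ induced by its vertices whose labels begin with $\beta$ (possibly empty). Two such subgraphs are linked if some edge of $D_{d,k}$ joins a vertex of one to a vertex of the other. *)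

theory Defs
  imports Main "HOL-Library.Sublist"
begin

primrec dc_t :: "nat \<Rightarrow> nat \<Rightarrow> nat" where
  "dc_t n 0 = n"
| "dc_t n (Suc j) = dc_t n j * (dc_t n j + 1)"

(* A vertex label (alpha_k,...,alpha_0) of DCell_k is represented as a function
   x :: nat => nat with x j = alpha_j for j <= k and x j = 0 for j > k. *)
definition dc_vertex :: "nat \<Rightarrow> nat \<Rightarrow> (nat \<Rightarrow> nat) \<Rightarrow> bool" where
  "dc_vertex n k x \<longleftrightarrow> x 0 < n \<and> (\<forall>j\<in>{1..k}. x j \<le> dc_t n (j - 1)) \<and> (\<forall>j>k. x j = 0)"

definition dc_uid :: "nat \<Rightarrow> nat \<Rightarrow> (nat \<Rightarrow> nat) \<Rightarrow> nat" where
  "dc_uid n j x = x 0 + (\<Sum>l=1..j. x l * dc_t n (l - 1))"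

(* Edges of DCell_k: level-0 edges (complete graph K_n inside a DCell_0) and
   level-j edges (j >= 1) inside a common DCell_j between copies a < b of DCell_{j-1}. *)
definition dc_edge :: "nat \<Rightarrow> nat \<Rightarrow> (nat \<Rightarrow> nat) \<Rightarrow> (nat \<Rightarrow> nat) \<Rightarrow> bool" where
  "dc_edge n k u v \<longleftrightarrow> dc_vertex n k u \<and> dc_vertex n k v \<and>
     (\<exists>j\<le>k. (\<forall>i>j. u i = v i) \<and>
        (if j = 0 then u 0 \<noteq> v 0
         else (u j < v j \<and> dc_uid n (j - 1) u = v j - 1 \<and> dc_uid n (j - 1) v = u j)
            \<or> (v j < u j \<and> dc_uid n (j - 1) v = u j - 1 \<and> dc_uid n (j - 1) u = v j)))"

(* The index set A = [a_k] x ... x [a_2], a_i = t_{i-1} + 1; a tuple alpha_k ... alpha_2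
   is the list [alpha_k, ..., alpha_2] (entry p is alpha_{k-p}). *)
definition dc_A :: "nat \<Rightarrow> nat \<Rightarrow> nat list set" where
  "dc_A n k = {\<alpha>. length \<alpha> = k - 1 \<and> (\<forall>p<k - 1. \<alpha> ! p < dc_t n (k - p - 1) + 1)}"

(* phi is represented by the set S of tuples alpha with phi(alpha) = 1 *)
definition tup_empty :: "nat list set \<Rightarrow> nat list \<Rightarrow> bool" where
  "tup_empty S \<beta> \<longleftrightarrow> \<not> (\<exists>\<alpha>\<in>S. prefix \<beta> \<alpha>)"

definition tup_full :: "nat \<Rightarrow> nat \<Rightarrow> nat list set \<Rightarrow> nat list \<Rightarrow> bool" where
  "tup_full n k S \<beta> \<longleftrightarrow> (\<forall>\<alpha>\<in>dc_A n k. prefix \<beta> \<alpha> \<longrightarrow> \<alpha> \<in> S)"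

(* Next(beta) where the fuel f = l - 2 for beta = alpha_k ... alpha_{l+1} *)
primrec next_aux :: "nat \<Rightarrow> nat \<Rightarrow> nat \<Rightarrow> nat list \<Rightarrow> nat list set \<Rightarrow> nat list set" where
  "next_aux n k 0 \<beta> S = insert (\<beta> @ [LEAST i. tup_empty S (\<beta> @ [i])]) S"
| "next_aux n k (Suc f) \<beta> S =
     (let m = (LEAST i. tup_empty S (\<beta> @ [i]));
          m' = (if m \<ge> dc_t n 1 + 1 then (LEAST i. \<not> tup_full n k S (\<beta> @ [i])) else m)
      in next_aux n k f (\<beta> @ [m']) S)"

definition dc_next :: "nat \<Rightarrow> nat \<Rightarrow> nat list set \<Rightarrow> nat list set" where
  "dc_next n k S = next_aux n k (k - 2) [] S"

definition dc_phi :: "nat \<Rightarrow> nat \<Rightarrow> nat \<Rightarrow> nat list set" where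
  "dc_phi n k d = (dc_next n k ^^ d) {}"

definition dc_tuple :: "nat \<Rightarrow> (nat \<Rightarrow> nat) \<Rightarrow> nat list" where
  "dc_tuple k x = map (\<lambda>p. x (k - p)) [0..<k - 1]"

definition pdc_vertices :: "nat \<Rightarrow> nat \<Rightarrow> nat \<Rightarrow> (nat \<Rightarrow> nat) set" where
  "pdc_vertices n k d = {x. dc_vertex n k x \<and> dc_tuple k x \<in> dc_phi n k d}"

definition sub_vertices :: "nat \<Rightarrow> nat \<Rightarrow> nat \<Rightarrow> nat list \<Rightarrow> (nat \<Rightarrow> nat) set" where
  "sub_vertices n k d \<beta> = {x \<in> pdc_vertices n k d.
      \<beta> = map (\<lambda>p. x (k - p)) [0..<length \<beta>]}"

definition linked :: "nat \<Rightarrow> nat \<Rightarrow> nat \<Rightarrow> nat list \<Rightarrow> nat list \<Rightarrow> bool" where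
  "linked n k d \<beta> \<gamma> \<longleftrightarrow> (\<exists>u\<in>sub_vertices n k d \<beta>. \<exists>v\<in>sub_vertices n k d \<gamma>. dc_edge n k u v)"

end

theory Submission
  imports Defs
begin

(* Let S be the set of DCell_1 tuples switched on after d calls of Next. By induction on d,
   S satisfies an invariant at every prefix \<beta>: the non-empty children of \<beta> form an initial
   segment; every non-empty child \<beta>c contains its zero extension \<beta>c0...0; and a child with
   index greater than t_1 is non-empty only if all its predecessors are full.
   Hence every child \<alpha>'i with i \<le> m contains a whole DCell_1, whose vertices realise all uids
   below t_1, and if m > t_1 the children \<alpha>'i with i < m are full and realise all uids below
   t_l \<ge> m. The level-(l+1) edge between copies i < j runs from uid j - 1 in \<alpha>'i to uid i in
   \<alpha>'j, so it is present as soon as both endpoints are realised. *)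

lemma dc_t_mono: "i \<le> j \<Longrightarrow> dc_t n i \<le> dc_t n j"
proof (induction j)
  case (Suc j)
  then show ?case by (cases "i = Suc j") (auto intro: le_trans[of _ "dc_t n j"])
qed simp

definition dc_digits :: "nat \<Rightarrow> nat \<Rightarrow> (nat \<Rightarrow> nat) \<Rightarrow> bool" where
  "dc_digits n l f \<longleftrightarrow> f 0 < n \<and> (\<forall>j\<in>{1..l}. f j \<le> dc_t n (j - 1))"

lemma div_le_of_less_mult_Suc: "v < T * (T + 1) \<Longrightarrow> v div T \<le> (T::nat)"
  using less_mult_imp_div_less[of v "T + 1" T] by (simp add: mult.commute)

lemma dc_uid_Suc: "dc_uid n (Suc l) f = dc_uid n l f + f (Suc l) * dc_t n l"
  by (simp add: dc_uid_def)

lemma dc_uid_cong: "(\<And>j. j \<le> l \<Longrightarrow> f j = g j) \<Longrightarrow> dc_uid n l f = dc_uid n l g"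
  by (simp add: dc_uid_def)

lemma dc_digits_uid_exists:
  "v < dc_t n l \<Longrightarrow> \<exists>f. dc_digits n l f \<and> dc_uid n l f = v"
proof (induction l arbitrary: v)
  case 0
  then show ?case by (intro exI[of _ "\<lambda>_. v"]) (simp add: dc_digits_def dc_uid_def)
next
  case (Suc l)
  define T where "T = dc_t n l"
  have v: "v < T * (T + 1)" using Suc.prems by (simp add: T_def)
  then have "T > 0" by (cases T) auto
  then obtain g where g: "dc_digits n l g" "dc_uid n l g = v mod T"
    using Suc.IH[of "v mod T"] by (auto simp: T_def)
  have q: "v div T \<le> T" using v by (rule div_le_of_less_mult_Suc)
  define f where "f = g(Suc l := v div T)"
  have "dc_uid n l f = dc_uid n l g" by (rule dc_uid_cong) (simp add: f_def)
  then have "dc_uid n (Suc l) f = v mod T + v div T * T"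
    using g(2) by (simp add: dc_uid_Suc f_def T_def)
  moreover have "dc_digits n (Suc l) f"
    using g(1) q by (auto simp: dc_digits_def f_def T_def le_Suc_eq)
  ultimately show ?case by auto
qed

lemma dc_low_digits_uid_exists:
  assumes "1 \<le> l" "0 < n" "v < dc_t n 1"
  shows "\<exists>f. dc_digits n l f \<and> (\<forall>j\<ge>2. f j = 0) \<and> dc_uid n l f = v"
proof -
  define f where "f = (\<lambda>j::nat. if j = 0 then v mod n else if j = 1 then v div n else 0)"
  have "v div n \<le> n" using assms(3) by (simp add: div_le_of_less_mult_Suc)
  then have "dc_digits n l f" using assms(2) by (auto simp: dc_digits_def f_def)
  moreover have "dc_uid n l f = v"
  proof -
    have "(\<Sum>j=1..l. f j * dc_t n (j - 1)) = (\<Sum>j\<in>{1}. f j * dc_t n (j - 1))"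
      by (rule sum.mono_neutral_right) (use assms(1) in \<open>auto simp: f_def\<close>)
    then show ?thesis by (simp add: dc_uid_def f_def)
  qed
  ultimately show ?thesis by (auto simp: f_def)
qed

definition dc_bounded :: "nat \<Rightarrow> nat \<Rightarrow> nat list \<Rightarrow> bool" where
  "dc_bounded n k \<gamma> \<longleftrightarrow> length \<gamma> \<le> k - 1 \<and> (\<forall>p<length \<gamma>. \<gamma> ! p < dc_t n (k - p - 1) + 1)"

definition zero_ext :: "nat \<Rightarrow> nat list \<Rightarrow> nat list" where
  "zero_ext k \<beta> = \<beta> @ replicate (k - 1 - length \<beta>) 0"

lemma prefix_zero_ext: "prefix \<gamma> (zero_ext k \<gamma>)"
  by (simp add: zero_ext_def)

lemma zero_ext_in_dc_A: "dc_bounded n k \<gamma> \<Longrightarrow> zero_ext k \<gamma> \<in> dc_A n k"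
  by (auto simp: zero_ext_def dc_bounded_def dc_A_def nth_append)

lemma zero_ext_snoc_0: "length \<beta> < k - 1 \<Longrightarrow> zero_ext k (\<beta> @ [0]) = zero_ext k \<beta>"
  by (simp add: zero_ext_def replicate_Suc[symmetric] Suc_diff_Suc del: replicate_Suc)

lemma dc_A_length: "\<alpha> \<in> dc_A n k \<Longrightarrow> length \<alpha> = k - 1"
  by (simp add: dc_A_def)

lemma ex_dc_A_prefix_iff: "(\<exists>\<alpha>\<in>dc_A n k. prefix \<gamma> \<alpha>) \<longleftrightarrow> dc_bounded n k \<gamma>"
proof
  assume "\<exists>\<alpha>\<in>dc_A n k. prefix \<gamma> \<alpha>"
  then obtain zs where A: "\<gamma> @ zs \<in> dc_A n k" by (auto simp: prefix_def)
  have "\<gamma> ! p < dc_t n (k - p - 1) + 1" if "p < length \<gamma>" for p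
    using A that by (auto simp: dc_A_def nth_append dest!: spec[of _ p])
  then show "dc_bounded n k \<gamma>" using A by (simp add: dc_bounded_def dc_A_def)
qed (use zero_ext_in_dc_A prefix_zero_ext in blast)

lemma dc_bounded_snoc:
  "length \<beta> < k - 1 \<Longrightarrow>
     dc_bounded n k (\<beta> @ [i]) \<longleftrightarrow> dc_bounded n k \<beta> \<and> i < dc_t n (k - length \<beta> - 1) + 1"
  by (auto simp: dc_bounded_def nth_append less_Suc_eq)

lemma finite_dc_A: "finite (dc_A n k)"
proof (rule finite_subset)
  show "dc_A n k \<subseteq> {\<alpha>. set \<alpha> \<subseteq> {..dc_t n k} \<and> length \<alpha> = k - 1}"
  proof
    fix \<alpha> assume \<alpha>: "\<alpha> \<in> dc_A n k"
    have "\<alpha> ! p \<le> dc_t n k" if "p < length \<alpha>" for p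
      using \<alpha> that dc_t_mono[of "k - p - 1" k n] by (auto simp: dc_A_def)
    then show "\<alpha> \<in> {\<alpha>. set \<alpha> \<subseteq> {..dc_t n k} \<and> length \<alpha> = k - 1}"
      using \<alpha> by (auto simp: dc_A_def in_set_conv_nth)
  qed
qed (simp add: finite_lists_length_eq)

lemma tup_empty_insert_iff:
  "tup_empty (insert x S) \<gamma> \<longleftrightarrow> tup_empty S \<gamma> \<and> \<not> prefix \<gamma> x"
  by (auto simp: tup_empty_def)

lemma tup_full_insert_iff: "\<not> prefix \<gamma> x \<Longrightarrow> tup_full n k (insert x S) \<gamma> \<longleftrightarrow> tup_full n k S \<gamma>"
  by (auto simp: tup_full_def)

lemma tup_full_mono: "tup_full n k S \<gamma> \<Longrightarrow> S \<subseteq> S' \<Longrightarrow> tup_full n k S' \<gamma>"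
  by (auto simp: tup_full_def)

lemma tup_empty_snoc: "tup_empty S \<beta> \<Longrightarrow> tup_empty S (\<beta> @ [i])"
  by (auto simp: tup_empty_def dest: append_prefixD)

lemma tup_empty_unbounded: "S \<subseteq> dc_A n k \<Longrightarrow> \<not> dc_bounded n k \<gamma> \<Longrightarrow> tup_empty S \<gamma>"
  unfolding tup_empty_def ex_dc_A_prefix_iff[symmetric] by blast

lemma not_tup_empty_bounded: "S \<subseteq> dc_A n k \<Longrightarrow> \<not> tup_empty S \<gamma> \<Longrightarrow> dc_bounded n k \<gamma>"
  using tup_empty_unbounded by blast

lemma tup_full_unbounded: "\<not> dc_bounded n k \<gamma> \<Longrightarrow> tup_full n k S \<gamma>"
  using ex_dc_A_prefix_iff by (auto simp: tup_full_def)

lemma tup_empty_not_full: "dc_bounded n k \<gamma> \<Longrightarrow> tup_empty S \<gamma> \<Longrightarrow> \<not> tup_full n k S \<gamma>"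
  using zero_ext_in_dc_A prefix_zero_ext by (fastforce simp: tup_empty_def tup_full_def)

lemma not_tup_full_leaf:
  assumes "S \<subseteq> dc_A n k" "length \<gamma> = k - 1" "\<not> tup_full n k S \<gamma>"
  shows "tup_empty S \<gamma>"
  using assms by (auto simp: tup_empty_def tup_full_def dc_A_def prefix_def)

lemma not_tup_full_child:
  assumes "length \<beta> < k - 1" "\<not> tup_full n k S \<beta>"
  obtains a where "dc_bounded n k (\<beta> @ [a])" "\<not> tup_full n k S (\<beta> @ [a])"
proof -
  obtain \<alpha> where \<alpha>: "\<alpha> \<in> dc_A n k" "prefix \<beta> \<alpha>" "\<alpha> \<notin> S"
    using assms(2) by (auto simp: tup_full_def)
  moreover have "length \<beta> < length \<alpha>" using assms(1) dc_A_length[OF \<alpha>(1)] by simp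
  ultimately obtain a zs where "\<alpha> = \<beta> @ a # zs"
    by (auto simp: prefix_def neq_Nil_conv)
  then have "prefix (\<beta> @ [a]) \<alpha>" by simp
  with \<alpha> have "dc_bounded n k (\<beta> @ [a])" "\<not> tup_full n k S (\<beta> @ [a])"
    unfolding ex_dc_A_prefix_iff[symmetric] tup_full_def by blast+
  then show ?thesis by (rule that)
qed

definition prefix_inv :: "nat \<Rightarrow> nat \<Rightarrow> nat list set \<Rightarrow> nat list \<Rightarrow> bool" where
  "prefix_inv n k S \<beta> \<longleftrightarrow>
     (\<forall>c c'. c' < c \<longrightarrow> \<not> tup_empty S (\<beta> @ [c]) \<longrightarrow> \<not> tup_empty S (\<beta> @ [c'])) \<and>
     (\<forall>c. \<not> tup_empty S (\<beta> @ [c]) \<longrightarrow> zero_ext k (\<beta> @ [c]) \<in> S) \<and>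
     (\<forall>c m. c < m \<longrightarrow> dc_t n 1 < m \<longrightarrow> \<not> tup_empty S (\<beta> @ [m]) \<longrightarrow> tup_full n k S (\<beta> @ [c]))"

definition phi_inv :: "nat \<Rightarrow> nat \<Rightarrow> nat list set \<Rightarrow> bool" where
  "phi_inv n k S \<longleftrightarrow> S \<subseteq> dc_A n k \<and> (\<forall>\<beta>. prefix_inv n k S \<beta>)"

definition least_empty_child :: "nat list set \<Rightarrow> nat list \<Rightarrow> nat" where
  "least_empty_child S \<beta> = (LEAST i. tup_empty S (\<beta> @ [i]))"

lemma not_tup_empty_child_iff:
  assumes "phi_inv n k S"
  shows "\<not> tup_empty S (\<beta> @ [i]) \<longleftrightarrow> i < least_empty_child S \<beta>"
proof
  have "\<not> dc_bounded n k (\<beta> @ [dc_t n k + 1])"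
  proof (cases "length \<beta> < k - 1")
    case True
    then show ?thesis
      using dc_t_mono[of "k - length \<beta> - 1" k n] by (simp add: dc_bounded_snoc)
  qed (simp add: dc_bounded_def)
  then have "tup_empty S (\<beta> @ [dc_t n k + 1])"
    using assms tup_empty_unbounded by (auto simp: phi_inv_def)
  then have m: "tup_empty S (\<beta> @ [least_empty_child S \<beta>])"
    unfolding least_empty_child_def by (rule LeastI)
  have down: "\<not> tup_empty S (\<beta> @ [c'])" if "c' < c" "\<not> tup_empty S (\<beta> @ [c])" for c c'
    using assms that by (simp add: phi_inv_def prefix_inv_def)
  assume "\<not> tup_empty S (\<beta> @ [i])"
  with m down show "i < least_empty_child S \<beta>"
    by (metis linorder_neqE_nat)
qed (unfold least_empty_child_def, rule not_less_Least)

lemma prefix_inv_leaf: "S \<subseteq> dc_A n k \<Longrightarrow> k - 1 \<le> length \<gamma> \<Longrightarrow> prefix_inv n k S \<gamma>"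
  using tup_empty_unbounded[of S n k] by (simp add: prefix_inv_def dc_bounded_def)

lemma prefix_inv_insert_unrelated:
  assumes "\<not> prefix \<gamma> x"
  shows "prefix_inv n k (insert x S) \<gamma> \<longleftrightarrow> prefix_inv n k S \<gamma>"
proof -
  have child: "\<not> prefix (\<gamma> @ [c]) x" for c
    using assms append_prefixD by blast
  then have "zero_ext k (\<gamma> @ [c]) \<noteq> x" for c
    using prefix_zero_ext by metis
  then show ?thesis
    by (simp add: prefix_inv_def tup_empty_insert_iff tup_full_insert_iff child)
qed

lemma prefix_inv_insert_child:
  assumes inv: "phi_inv n k S" and x: "prefix (\<beta> @ [c]) x"
    and c: "c \<le> least_empty_child S \<beta>"
    and new_zero: "c = least_empty_child S \<beta> \<Longrightarrow> x = zero_ext k (\<beta> @ [c])"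
    and new_full: "c = least_empty_child S \<beta> \<Longrightarrow> dc_t n 1 < c \<Longrightarrow> \<forall>c'<c. tup_full n k S (\<beta> @ [c'])"
  shows "prefix_inv n k (insert x S) \<beta>"
proof -
  define m where "m = least_empty_child S \<beta>"
  have "prefix (\<beta> @ [i]) x \<longleftrightarrow> i = c" for i
    using x by (auto simp: prefix_def)
  then have ne: "\<not> tup_empty (insert x S) (\<beta> @ [i]) \<longleftrightarrow> i < m \<or> i = c" for i
    using not_tup_empty_child_iff[OF inv] by (simp add: tup_empty_insert_iff m_def)
  have old: "prefix_inv n k S \<beta>" using inv by (simp add: phi_inv_def)
  have old_or_new: "i < m \<or> i = m \<and> c = m" if "i < m \<or> i = c" for i
    using that c by (auto simp: m_def)
  have zero: "zero_ext k (\<beta> @ [i]) \<in> insert x S" if "i < m \<or> i = c" for i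
  proof -
    have "zero_ext k (\<beta> @ [i]) \<in> S" if "i < m"
      using old that not_tup_empty_child_iff[OF inv] by (simp add: prefix_inv_def m_def)
    then show ?thesis using old_or_new[OF that] new_zero by (auto simp: m_def)
  qed
  have full: "tup_full n k (insert x S) (\<beta> @ [c'])"
    if "c' < i" "dc_t n 1 < i" "i < m \<or> i = c" for c' i
  proof -
    have "tup_full n k S (\<beta> @ [c'])" if "i < m"
      using old that \<open>c' < i\<close> \<open>dc_t n 1 < i\<close> not_tup_empty_child_iff[OF inv]
      by (simp add: prefix_inv_def m_def)
    then have "tup_full n k S (\<beta> @ [c'])"
      using old_or_new[OF that(3)] new_full that(1,2) by (auto simp: m_def)
    then show ?thesis by (rule tup_full_mono) auto
  qed
  have down: "i' < m \<or> i' = c" if "i' < i" "i < m \<or> i = c" for i i'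
    using that c by (auto simp: m_def)
  show ?thesis
    unfolding prefix_inv_def ne using down zero full by (intro conjI allI impI) blast+
qed

lemma prefix_between_cases:
  assumes "prefix \<beta> \<gamma>" "prefix (\<beta> @ [c]) x"
  shows "\<gamma> = \<beta> \<or> prefix (\<beta> @ [c]) \<gamma> \<or> \<not> prefix \<gamma> x"
proof -
  have "prefix (\<beta> @ [c]) \<gamma> \<or> \<gamma> = \<beta> @ [c] \<or> prefix \<gamma> \<beta>" if "prefix \<gamma> x"
    using that assms(2) prefix_same_cases[of \<gamma> x "\<beta> @ [c]"] by (auto simp: prefix_snoc)
  then show ?thesis using assms(1) prefix_order.antisym by blast
qed

definition next_insertion :: "nat \<Rightarrow> nat \<Rightarrow> nat list set \<Rightarrow> nat list \<Rightarrow> nat list set \<Rightarrow> bool" where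
  "next_insertion n k S \<beta> R \<longleftrightarrow> (\<exists>x. R = insert x S \<and> x \<in> dc_A n k \<and> x \<notin> S \<and> prefix \<beta> x \<and>
     (tup_empty S \<beta> \<longrightarrow> x = zero_ext k \<beta>) \<and> (\<forall>\<gamma>. prefix \<beta> \<gamma> \<longrightarrow> prefix_inv n k (insert x S) \<gamma>))"

lemma next_aux_0_insertion:
  assumes inv: "phi_inv n k S" and len: "length \<beta> + 2 = k" and nf: "\<not> tup_full n k S \<beta>"
  shows "next_insertion n k S \<beta> (next_aux n k 0 \<beta> S)"
proof -
  have SA: "S \<subseteq> dc_A n k" using inv by (simp add: phi_inv_def)
  define m where "m = least_empty_child S \<beta>"
  define x where "x = \<beta> @ [m]"
  have next_eq: "next_aux n k 0 \<beta> S = insert x S" by (simp add: x_def m_def least_empty_child_def)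
  have x_zero: "zero_ext k x = x" using len by (simp add: zero_ext_def x_def)
  have "length \<beta> < k - 1" using len by simp
  then obtain a where a: "dc_bounded n k (\<beta> @ [a])" "\<not> tup_full n k S (\<beta> @ [a])"
    using not_tup_full_child[OF _ nf] by blast
  have "tup_empty S (\<beta> @ [a])" using not_tup_full_leaf[OF SA _ a(2)] len by simp
  then have "m \<le> a" using not_tup_empty_child_iff[OF inv, of \<beta> a] by (simp add: m_def)
  then have x_bounded: "dc_bounded n k x" and "m \<le> dc_t n 1"
    using a(1) len dc_bounded_snoc[of \<beta> k n] by (auto simp: x_def)
  have x_A: "x \<in> dc_A n k" using zero_ext_in_dc_A[OF x_bounded] x_zero by simp
  have x_new: "x \<notin> S" using not_tup_empty_child_iff[OF inv, of \<beta> m] by (auto simp: tup_empty_def x_def m_def)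
  have "m = 0" if "tup_empty S \<beta>"
    using not_tup_empty_child_iff[OF inv, of \<beta> 0] tup_empty_snoc[OF that] by (simp add: m_def)
  then have "tup_empty S \<beta> \<longrightarrow> x = zero_ext k \<beta>" using len by (auto simp: x_def zero_ext_def)
  moreover have "prefix_inv n k (insert x S) \<gamma>" if "prefix \<beta> \<gamma>" for \<gamma>
  proof (cases "\<gamma> = \<beta>")
    case True
    then show ?thesis
      using prefix_inv_insert_child[OF inv, of \<beta> m x] x_zero \<open>m \<le> dc_t n 1\<close>
      by (simp add: x_def m_def)
  next
    case False
    then have "k - 1 \<le> length \<gamma>" using that len prefix_length_less[of \<beta> \<gamma>] by fastforce
    then show ?thesis using SA x_A by (intro prefix_inv_leaf) auto
  qed
  moreover have "prefix \<beta> x" by (simp add: x_def)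
  ultimately show ?thesis unfolding next_insertion_def next_eq using x_A x_new by blast
qed

definition next_child :: "nat \<Rightarrow> nat \<Rightarrow> nat list set \<Rightarrow> nat list \<Rightarrow> nat" where
  "next_child n k S \<beta> = (let m = least_empty_child S \<beta> in
     if dc_t n 1 + 1 \<le> m then LEAST i. \<not> tup_full n k S (\<beta> @ [i]) else m)"

lemma next_aux_Suc_eq: "next_aux n k (Suc f) \<beta> S = next_aux n k f (\<beta> @ [next_child n k S \<beta>]) S"
  by (simp add: next_child_def least_empty_child_def Let_def)

lemma next_child_not_full:
  assumes inv: "phi_inv n k S" and len: "length \<beta> + 2 \<le> k" and nf: "\<not> tup_full n k S \<beta>"
  shows "\<not> tup_full n k S (\<beta> @ [next_child n k S \<beta>])"
proof -
  define m where "m = least_empty_child S \<beta>"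
  have "length \<beta> < k - 1" using len by simp
  then obtain a where a: "dc_bounded n k (\<beta> @ [a])" "\<not> tup_full n k S (\<beta> @ [a])"
    using not_tup_full_child[OF _ nf] by blast
  show ?thesis
  proof (cases "dc_t n 1 + 1 \<le> m")
    case True
    then show ?thesis
      using LeastI[of "\<lambda>i. \<not> tup_full n k S (\<beta> @ [i])", OF a(2)]
      by (simp add: next_child_def m_def[symmetric])
  next
    case False
    have "dc_t n 1 \<le> dc_t n (k - length \<beta> - 1)" using len by (intro dc_t_mono) simp
    then have "dc_bounded n k (\<beta> @ [m])"
      using a(1) False len dc_bounded_snoc[of \<beta> k n] by auto
    moreover have "tup_empty S (\<beta> @ [m])" using not_tup_empty_child_iff[OF inv, of \<beta> m] by (simp add: m_def)
    ultimately show ?thesis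
      using False tup_empty_not_full by (simp add: next_child_def m_def[symmetric])
  qed
qed

lemma next_child_le_least_empty:
  assumes inv: "phi_inv n k S" and len: "length \<beta> + 2 \<le> k" and nf: "\<not> tup_full n k S \<beta>"
  shows "next_child n k S \<beta> \<le> least_empty_child S \<beta>"
proof (rule ccontr)
  define m where "m = least_empty_child S \<beta>"
  define c where "c = next_child n k S \<beta>"
  assume "\<not> next_child n k S \<beta> \<le> least_empty_child S \<beta>"
  then have "m < c" by (simp add: m_def c_def)
  then have c: "c = (LEAST i. \<not> tup_full n k S (\<beta> @ [i]))"
    by (auto simp: c_def next_child_def m_def[symmetric] Let_def split: if_splits)
  have "tup_full n k S (\<beta> @ [m])"
    using not_less_Least[of m "\<lambda>i. \<not> tup_full n k S (\<beta> @ [i])"] \<open>m < c\<close> c by simp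
  moreover have "tup_empty S (\<beta> @ [m])" using not_tup_empty_child_iff[OF inv, of \<beta> m] by (simp add: m_def)
  ultimately have "\<not> dc_bounded n k (\<beta> @ [m])" using tup_empty_not_full by blast
  then have "\<not> dc_bounded n k (\<beta> @ [c])" using \<open>m < c\<close> len dc_bounded_snoc[of \<beta> k n] by auto
  then show False
    using next_child_not_full[OF inv len nf] tup_full_unbounded by (simp add: c_def)
qed

lemma next_child_fills:
  assumes "next_child n k S \<beta> = least_empty_child S \<beta>" "dc_t n 1 < next_child n k S \<beta>"
  shows "\<forall>c'<next_child n k S \<beta>. tup_full n k S (\<beta> @ [c'])"
proof -
  have "next_child n k S \<beta> = (LEAST i. \<not> tup_full n k S (\<beta> @ [i]))"
    using assms by (simp add: next_child_def Let_def)
  then show ?thesis using not_less_Least by auto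
qed

lemma next_aux_Suc_insertion:
  assumes inv: "phi_inv n k S" and len: "length \<beta> + 2 < k" and nf: "\<not> tup_full n k S \<beta>"
    and IH: "next_insertion n k S (\<beta> @ [next_child n k S \<beta>])
               (next_aux n k f (\<beta> @ [next_child n k S \<beta>]) S)"
  shows "next_insertion n k S \<beta> (next_aux n k (Suc f) \<beta> S)"
proof -
  define c where "c = next_child n k S \<beta>"
  define m where "m = least_empty_child S \<beta>"
  obtain x where x: "next_aux n k f (\<beta> @ [c]) S = insert x S" "x \<in> dc_A n k" "x \<notin> S"
      "prefix (\<beta> @ [c]) x" "tup_empty S (\<beta> @ [c]) \<longrightarrow> x = zero_ext k (\<beta> @ [c])"
      "\<And>\<gamma>. prefix (\<beta> @ [c]) \<gamma> \<Longrightarrow> prefix_inv n k (insert x S) \<gamma>"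
    using IH by (auto simp: next_insertion_def c_def)
  have c_le: "c \<le> m" using next_child_le_least_empty[OF inv _ nf] len by (simp add: c_def m_def)
  have new_zero: "x = zero_ext k (\<beta> @ [c])" if "c = m"
    using x(5) not_tup_empty_child_iff[OF inv, of \<beta> c] that by (simp add: m_def)
  have "x = zero_ext k \<beta>" if "tup_empty S \<beta>"
  proof -
    have "m = 0"
      using not_tup_empty_child_iff[OF inv, of \<beta> 0] tup_empty_snoc[OF that] by (simp add: m_def)
    then have "c = 0" using c_le by simp
    then show ?thesis using new_zero \<open>m = 0\<close> zero_ext_snoc_0[of \<beta> k] len by simp
  qed
  moreover have "prefix_inv n k (insert x S) \<gamma>" if \<gamma>: "prefix \<beta> \<gamma>" for \<gamma>
  proof -
    consider "\<gamma> = \<beta>" | "prefix (\<beta> @ [c]) \<gamma>" | "\<not> prefix \<gamma> x"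
      using prefix_between_cases[OF \<gamma> x(4)] by blast
    then show ?thesis
    proof cases
      case 1
      show ?thesis unfolding 1
        using prefix_inv_insert_child[OF inv x(4)] c_le new_zero next_child_fills[of n k S \<beta>]
        by (simp add: c_def m_def)
    next
      case 3
      then show ?thesis using inv prefix_inv_insert_unrelated by (simp add: phi_inv_def)
    qed (rule x(6))
  qed
  moreover have "prefix \<beta> x" using x(4) append_prefixD by blast
  ultimately show ?thesis
    unfolding next_insertion_def next_aux_Suc_eq c_def[symmetric] x(1) using x(2,3) by blast
qed

lemma next_aux_insertion:
  "phi_inv n k S \<Longrightarrow> length \<beta> + f + 2 = k \<Longrightarrow> \<not> tup_full n k S \<beta> \<Longrightarrow>
     next_insertion n k S \<beta> (next_aux n k f \<beta> S)"
proof (induction f arbitrary: \<beta>)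
  case 0
  then show ?case using next_aux_0_insertion by simp
next
  case (Suc f)
  have "length \<beta> + 2 < k" using Suc.prems(2) by simp
  moreover have "\<not> tup_full n k S (\<beta> @ [next_child n k S \<beta>])"
    using next_child_not_full[OF Suc.prems(1) _ Suc.prems(3)] Suc.prems(2) by simp
  ultimately show ?case
    using next_aux_Suc_insertion[OF Suc.prems(1) _ Suc.prems(3)] Suc.IH[OF Suc.prems(1)] Suc.prems(2)
    by simp
qed

lemma dc_phi_Suc: "dc_phi n k (Suc d) = dc_next n k (dc_phi n k d)"
  unfolding dc_phi_def by simp

lemma dc_phi_inv:
  "2 \<le> k \<Longrightarrow> d \<le> card (dc_A n k) \<Longrightarrow> phi_inv n k (dc_phi n k d) \<and> card (dc_phi n k d) = d"
proof (induction d)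
  case 0
  have "prefix_inv n k {} \<beta>" for \<beta> by (simp add: prefix_inv_def tup_empty_def)
  then show ?case by (simp add: dc_phi_def phi_inv_def)
next
  case (Suc d)
  define S where "S = dc_phi n k d"
  have inv: "phi_inv n k S" and card: "card S = d" using Suc by (auto simp: S_def)
  have fin: "finite S" using inv finite_dc_A finite_subset by (auto simp: phi_inv_def)
  have nf: "\<not> tup_full n k S []"
  proof
    assume "tup_full n k S []"
    then have "dc_A n k \<subseteq> S" by (auto simp: tup_full_def)
    then have "card (dc_A n k) \<le> card S" by (rule card_mono[OF fin])
    then show False using card Suc.prems(2) by simp
  qed
  have "length ([] :: nat list) + (k - 2) + 2 = k" using Suc.prems(1) by simp
  then have "next_insertion n k S [] (dc_next n k S)"
    unfolding dc_next_def by (rule next_aux_insertion[OF inv _ nf])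
  then obtain x where x: "dc_next n k S = insert x S" "x \<in> dc_A n k" "x \<notin> S"
      "\<forall>\<gamma>. prefix [] \<gamma> \<longrightarrow> prefix_inv n k (insert x S) \<gamma>"
    unfolding next_insertion_def by blast
  have "dc_phi n k (Suc d) = insert x S" using x(1) by (simp add: dc_phi_Suc S_def)
  moreover have "phi_inv n k (insert x S)" using inv x(2,4) by (simp add: phi_inv_def)
  moreover have "card (insert x S) = Suc d" using fin x(3) card by simp
  ultimately show ?case by simp
qed

lemma nonempty_child_le_dc_t:
  assumes "phi_inv n k S" "\<not> tup_empty S (\<beta> @ [m])" "length \<beta> + l + 1 = k"
  shows "m \<le> dc_t n l"
proof -
  have "S \<subseteq> dc_A n k" using assms(1) by (simp add: phi_inv_def)
  then have "dc_bounded n k (\<beta> @ [m])" using not_tup_empty_bounded assms(2) by blast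
  moreover have "k - length \<beta> - 1 = l" "length \<beta> < k - 1 \<or> l = 0" using assms(3) by auto
  ultimately show ?thesis by (auto simp: dc_bounded_snoc dc_bounded_def)
qed

lemma dc_tuple_in_dc_A:
  assumes "dc_vertex n k u"
  shows "dc_tuple k u \<in> dc_A n k"
proof -
  have "u (k - p) < dc_t n (k - p - 1) + 1" if "p < k - 1" for p
    using assms that by (auto simp: dc_vertex_def dest!: bspec[of _ _ "k - p"])
  then show ?thesis by (simp add: dc_tuple_def dc_A_def)
qed

lemma prefix_dc_tuple_sub_vertex:
  assumes "u \<in> sub_vertices n k d \<gamma>" "length \<gamma> \<le> k - 1"
  shows "prefix \<gamma> (dc_tuple k u)"
proof -
  have "\<gamma> = take (length \<gamma>) (dc_tuple k u)"
    using assms by (simp add: sub_vertices_def dc_tuple_def take_map min_def)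
  then show ?thesis by (metis take_is_prefix)
qed

lemma sub_vertex_not_tup_empty:
  "u \<in> sub_vertices n k d \<gamma> \<Longrightarrow> length \<gamma> \<le> k - 1 \<Longrightarrow> \<not> tup_empty (dc_phi n k d) \<gamma>"
  using prefix_dc_tuple_sub_vertex
  by (fastforce simp: tup_empty_def sub_vertices_def pdc_vertices_def)

lemma sub_vertex_high:
  assumes "u \<in> sub_vertices n k d \<gamma>" "k - length \<gamma> < j" "length \<gamma> \<le> k"
  shows "u j = (if j \<le> k then \<gamma> ! (k - j) else 0)"
proof (cases "j \<le> k")
  case True
  then have "k - j < length \<gamma>" using assms(2,3) by simp
  then show ?thesis
    using assms(1) True by (auto simp: sub_vertices_def dest: arg_cong[where f = "\<lambda>xs. xs ! (k - j)"])
next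
  case False
  then show ?thesis using assms(1) by (simp add: sub_vertices_def pdc_vertices_def dc_vertex_def)
qed

definition dc_label :: "nat \<Rightarrow> nat \<Rightarrow> nat list \<Rightarrow> (nat \<Rightarrow> nat) \<Rightarrow> nat \<Rightarrow> nat" where
  "dc_label k l \<gamma> f = (\<lambda>j. if j \<le> l then f j else if j \<le> k then \<gamma> ! (k - j) else 0)"

lemma dc_uid_dc_label: "dc_uid n l (dc_label k l \<gamma> f) = dc_uid n l f"
  by (rule dc_uid_cong) (simp add: dc_label_def)

lemma dc_label_vertex:
  assumes "dc_digits n l f" "dc_bounded n k \<gamma>" "length \<gamma> + l = k"
  shows "dc_vertex n k (dc_label k l \<gamma> f)"
  unfolding dc_vertex_def
proof (intro conjI ballI allI impI)
  fix j assume j: "j \<in> {1..k}"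
  show "dc_label k l \<gamma> f j \<le> dc_t n (j - 1)"
  proof (cases "j \<le> l")
    case False
    then have "k - j < length \<gamma>" "k - (k - j) - 1 = j - 1" using j assms(3) by auto
    then show ?thesis using assms(2) j False by (auto simp: dc_label_def dc_bounded_def)
  qed (use assms(1) j in \<open>simp add: dc_label_def dc_digits_def\<close>)
qed (use assms in \<open>auto simp: dc_label_def dc_digits_def dc_bounded_def\<close>)

lemma dc_tuple_dc_label:
  assumes "1 \<le> l" "length \<gamma> + l = k"
  shows "dc_tuple k (dc_label k l \<gamma> f) = \<gamma> @ map (\<lambda>i. f (l - i)) [0..<l - 1]"
proof (rule nth_equalityI)
  fix p assume "p < length (dc_tuple k (dc_label k l \<gamma> f))"
  then have p: "p < k - 1" by (simp add: dc_tuple_def)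
  show "dc_tuple k (dc_label k l \<gamma> f) ! p = (\<gamma> @ map (\<lambda>i. f (l - i)) [0..<l - 1]) ! p"
  proof (cases "p < length \<gamma>")
    case False
    then have "[0..<l - 1] ! (p - length \<gamma>) = p - length \<gamma>" "l - (p - length \<gamma>) = k - p" "k - p \<le> l"
      using p assms by auto
    then show ?thesis using p False by (simp add: dc_tuple_def dc_label_def nth_append)
  next
    case True
    then have "\<not> k - p \<le> l" "k - (k - p) = p" using assms(2) by auto
    then show ?thesis using p True by (simp add: dc_tuple_def dc_label_def nth_append)
  qed
qed (use assms in \<open>simp add: dc_tuple_def\<close>)

lemma dc_label_sub_vertex:
  assumes "dc_digits n l f" "dc_bounded n k \<gamma>" "1 \<le> l" "length \<gamma> + l = k"
    and "dc_tuple k (dc_label k l \<gamma> f) \<in> dc_phi n k d"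
  shows "dc_label k l \<gamma> f \<in> sub_vertices n k d \<gamma>"
proof -
  have "\<gamma> = take (length \<gamma>) (dc_tuple k (dc_label k l \<gamma> f))"
    using dc_tuple_dc_label[OF assms(3,4)] by simp
  then have "\<gamma> = map (\<lambda>p. dc_label k l \<gamma> f (k - p)) [0..<length \<gamma>]"
    using assms(3,4) by (simp add: dc_tuple_def take_map min_def)
  then show ?thesis
    using assms dc_label_vertex by (simp add: sub_vertices_def pdc_vertices_def)
qed

lemma sub_vertex_below_zero_ext:
  assumes "0 < n" "1 \<le> l" "dc_bounded n k \<gamma>" "length \<gamma> + l = k"
    and "zero_ext k \<gamma> \<in> dc_phi n k d" "v < dc_t n 1"
  shows "\<exists>u\<in>sub_vertices n k d \<gamma>. dc_uid n l u = v"
proof -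
  obtain f where f: "dc_digits n l f" "\<forall>j\<ge>2. f j = 0" "dc_uid n l f = v"
    using dc_low_digits_uid_exists[OF assms(2,1,6)] by blast
  have "map (\<lambda>i. f (l - i)) [0..<l - 1] = replicate (l - 1) 0"
    using f(2) by (intro nth_equalityI) auto
  then have "dc_tuple k (dc_label k l \<gamma> f) = zero_ext k \<gamma>"
    using dc_tuple_dc_label[OF assms(2,4)] assms(4) by (simp add: zero_ext_def)
  then show ?thesis
    using dc_label_sub_vertex[OF f(1) assms(3,2,4)] assms(5) dc_uid_dc_label f(3) by metis
qed

lemma sub_vertex_of_full:
  assumes "0 < n" "1 \<le> l" "dc_bounded n k \<gamma>" "length \<gamma> + l = k"
    and "tup_full n k (dc_phi n k d) \<gamma>" "v < dc_t n l"
  shows "\<exists>u\<in>sub_vertices n k d \<gamma>. dc_uid n l u = v"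
proof -
  obtain f where f: "dc_digits n l f" "dc_uid n l f = v"
    using dc_digits_uid_exists[OF assms(6)] by blast
  have "dc_tuple k (dc_label k l \<gamma> f) \<in> dc_A n k"
    by (rule dc_tuple_in_dc_A, rule dc_label_vertex[OF f(1) assms(3,4)])
  moreover have "prefix \<gamma> (dc_tuple k (dc_label k l \<gamma> f))"
    using dc_tuple_dc_label[OF assms(2,4)] by simp
  ultimately have "dc_tuple k (dc_label k l \<gamma> f) \<in> dc_phi n k d"
    using assms(5) by (simp add: tup_full_def)
  then show ?thesis
    using dc_label_sub_vertex[OF f(1) assms(3,2,4)] dc_uid_dc_label f(2) by metis
qed

lemma linked_by_uids:
  assumes len: "length \<alpha>' + l + 1 = k" and "i < j"
    and u: "u \<in> sub_vertices n k d (\<alpha>' @ [i])" "dc_uid n l u = j - 1"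
    and w: "w \<in> sub_vertices n k d (\<alpha>' @ [j])" "dc_uid n l w = i"
  shows "linked n k d (\<alpha>' @ [i]) (\<alpha>' @ [j])"
proof -
  have high: "x j' = (if j' \<le> k then (\<alpha>' @ [c]) ! (k - j') else 0)"
    if "x \<in> sub_vertices n k d (\<alpha>' @ [c])" "l < j'" for x c j'
    using sub_vertex_high[OF that(1)] that(2) len by simp
  have "u (l + 1) = i" "w (l + 1) = j" using high[OF u(1)] high[OF w(1)] len by auto
  moreover have "u j' = w j'" if "l + 1 < j'" for j'
  proof -
    have "j' \<le> k \<Longrightarrow> k - j' < length \<alpha>'" using that len by linarith
    then show ?thesis using high[OF u(1)] high[OF w(1)] that by (simp add: nth_append)
  qed
  moreover have "dc_vertex n k u" "dc_vertex n k w"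
    using u(1) w(1) by (simp_all add: sub_vertices_def pdc_vertices_def)
  ultimately have "dc_edge n k u w"
    unfolding dc_edge_def using len \<open>i < j\<close> u(2) w(2) by (intro conjI exI[of _ "l + 1"]) auto
  then show ?thesis unfolding linked_def using u(1) w(1) by blast
qed

lemma child_sub_vertex_exists:
  assumes "0 < n" "1 \<le> l" "length \<beta> + l + 1 = k"
    and inv: "phi_inv n k (dc_phi n k d)" and m: "\<not> tup_empty (dc_phi n k d) (\<beta> @ [m])"
    and "i \<le> m" and v: "v < dc_t n 1 \<or> i < m \<and> dc_t n 1 < m \<and> v < dc_t n l"
  shows "\<exists>u\<in>sub_vertices n k d (\<beta> @ [i]). dc_uid n l u = v"
proof -
  let ?S = "dc_phi n k d"
  have node: "prefix_inv n k ?S \<beta>" and "?S \<subseteq> dc_A n k" using inv by (simp_all add: phi_inv_def)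
  have i: "\<not> tup_empty ?S (\<beta> @ [i])"
  proof (cases "i = m")
    case False
    then show ?thesis using m \<open>i \<le> m\<close> node unfolding prefix_inv_def by (meson le_neq_implies_less)
  qed (use m in simp)
  then have bounded: "dc_bounded n k (\<beta> @ [i])" using not_tup_empty_bounded \<open>?S \<subseteq> dc_A n k\<close> by blast
  have len: "length (\<beta> @ [i]) + l = k" using assms(3) by simp
  show ?thesis
  proof (cases "v < dc_t n 1")
    case True
    have "zero_ext k (\<beta> @ [i]) \<in> ?S" using i node by (simp add: prefix_inv_def)
    then show ?thesis using sub_vertex_below_zero_ext[OF assms(1,2) bounded len _ True] by blast
  next
    case False
    then have "tup_full n k ?S (\<beta> @ [i])" "v < dc_t n l"
      using v node m by (auto simp: prefix_inv_def)
    then show ?thesis using sub_vertex_of_full[OF assms(1,2) bounded len] by blast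
  qed
qed

theorem lemma8:
  fixes n k l d m :: nat and \<alpha>' :: "nat list"
  assumes "n \<ge> 2"
    and "3 \<le> l + 2" and "l + 2 \<le> k"
    and "d \<le> card (dc_A n k)"
    and "length \<alpha>' = k - (l + 1)"
    and "sub_vertices n k d (\<alpha>' @ [m]) \<noteq> {}"
    and "\<forall>j>m. sub_vertices n k d (\<alpha>' @ [j]) = {}"
  shows "(\<forall>i j. i < j \<and> j < m \<longrightarrow> linked n k d (\<alpha>' @ [i]) (\<alpha>' @ [j]))
       \<and> min m (dc_t n 1) \<le> card {i. i \<noteq> m \<and> linked n k d (\<alpha>' @ [i]) (\<alpha>' @ [m])}"
proof -
  have len: "length \<alpha>' + l + 1 = k" and "1 \<le> l" "0 < n" using assms(1,2,3,5) by auto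
  have inv: "phi_inv n k (dc_phi n k d)" using dc_phi_inv assms(3,4) by simp
  obtain u where "u \<in> sub_vertices n k d (\<alpha>' @ [m])" using assms(6) by blast
  moreover have "length (\<alpha>' @ [m]) \<le> k - 1" using len \<open>1 \<le> l\<close> by simp
  ultimately have m: "\<not> tup_empty (dc_phi n k d) (\<alpha>' @ [m])" by (rule sub_vertex_not_tup_empty)
  note child = child_sub_vertex_exists[OF \<open>0 < n\<close> \<open>1 \<le> l\<close> len inv m]
  have "m \<le> dc_t n l" using nonempty_child_le_dc_t[OF inv m] len by simp
  have pairs: "linked n k d (\<alpha>' @ [i]) (\<alpha>' @ [j])" if "i < j" "j < m" for i j
    using child[of i "j - 1"] child[of j i] linked_by_uids[OF len \<open>i < j\<close>] that \<open>m \<le> dc_t n l\<close>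
    by fastforce
  have "linked n k d (\<alpha>' @ [i]) (\<alpha>' @ [m])" if "i < min m (dc_t n 1)" for i
    using child[of i "m - 1"] child[of m i] linked_by_uids[OF len, of i m] that \<open>m \<le> dc_t n l\<close>
    by fastforce
  then have "{..<min m (dc_t n 1)} \<subseteq> {i. i \<noteq> m \<and> linked n k d (\<alpha>' @ [i]) (\<alpha>' @ [m])}"
    by auto
  moreover have "{i. i \<noteq> m \<and> linked n k d (\<alpha>' @ [i]) (\<alpha>' @ [m])} \<subseteq> {..m}"
    using assms(7) by (auto simp: linked_def not_le[symmetric])
  ultimately have "card {..<min m (dc_t n 1)} \<le> card {i. i \<noteq> m \<and> linked n k d (\<alpha>' @ [i]) (\<alpha>' @ [m])}"
    by (meson card_mono finite_atMost finite_subset)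
  then show ?thesis using pairs by simp
qed

end
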